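(* Let $M(X,Y)$ be the set of multirelations $X\leftrightarrow\mathcal{P}Y$ and $U=X\times\mathcal{P}(Y)$. (1) $\sqsubseteq_\downarrow$ is a preorder on $M(X,Y)$; $\Cup$ and $\Cap$ are associative and commutative operations with units $1_\Cup$ and $1_\Cap$ respectively, each monotone in both arguments with respect to $\sqsubseteq_\downarrow$; and $\emptyset\sqsubseteq_\downarrow R\sqsubseteq_\downarrow U$ for all $R$. (2) The same holds for $\sqsubseteq_\uparrow$, with least element $U$ and greatest element $\emptyset$, i.e. $U\sqsubseteq_\uparrow R\sqsubseteq_\uparrow\emptyset$ for all $R$. (3) The same holds for $\sqsubseteq_\updownarrow$ (a preorder with respect to which $\Cup$ and $\Cap$ are monotone in both arguments). (4) Inner complementation $R\mapsto\widetilde{R}$ is a bijection interchanging $\Cup$ with $\Cap$ and $1_\Cup$ with $1_\Cap$, and for all $R,S$: $R\sqsubseteq_\downarrow S\iff\widetilde{S}\sqsubseteq_\uparrow\widetilde{R}$, $R\sqsubseteq_\uparrow S\iff\widetilde{S}\sqsubseteq_\downarrow\widetilde{R}$, and $R\sqsubseteq_\updownarrow S\iff\widetilde{S}\sqsubseteq_\updownarrow\widetilde{R}$. (5) Each of $\sqsubseteq_\downarrow,\sqsubseteq_\uparrow,\sqsubseteq_\updownarrow$ (denote it $\sqsubseteq$) is a precongruence for $\cup$, $(-)^{\uparrow}$, $(-)^{\downarrow}$ and $(-)^{\updownarrow}$: if $R\sqsubseteq S$ then $R\cup T\sqsubseteq S\cup T$, $T\cup R\sqsubseteq T\cup S$,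 $R^{\uparrow}\sqsubseteq S^{\uparrow}$, $R^{\downarrow}\sqsubseteq S^{\downarrow}$ and $R^{\updownarrow}\sqsubseteq S^{\updownarrow}$. (6) Peleg composition preserves $\sqsubseteq_\downarrow$, $\sqsubseteq_\uparrow$ and $\sqsubseteq_\updownarrow$ in its second argument: if $R\sqsubseteq S$ for $R,S:Y\leftrightarrow\mathcal{P}Z$, then $T\ast R\sqsubseteq T\ast S$ for every $T:X\leftrightarrow\mathcal{P}Y$.
   Context: $R\Cup S=\{(a,A\cup B)\mid (a,A)\in R,(a,B)\in S\}$, $R\Cap S=\{(a,A\cap B)\mid (a,A)\in R,(a,B)\in S\}$, $1_\Cup=\{(a,\emptyset)\mid a\in X\}$, $1_\Cap=\{(a,Y)\mid a\in X\}$, $\widetilde{R}=\{(a,Y\setminus A)\mid (a,A)\in R\}$. $R^{\uparrow}=\{(a,A)\mid\exists B.(a,B)\in R\wedge B\subseteq A\}$, $R^{\downarrow}=\{(a,A)\mid\exists B.(a,B)\in R\wedge A\subseteq B\}$, $R^{\updownarrow}=R^{\uparrow}\cap R^{\downarrow}$. Preorders: $R\sqsubseteq_\uparrow S\iff S\subseteq R^{\uparrow}$; $R\sqsubseteq_\downarrow S\iff R\subseteq S^{\downarrow}$; $R\sqsubseteq_\updownarrow S\iff R\sqsubseteq_\downarrow S\wedge R\sqsubseteq_\uparrow S$. Peleg composition of $T:X\leftrightarrow\mathcal{P}Y$ and $S:Y\leftrightarrow\mathcal{P}Z$: $T\ast S=\{(a,C)\mid\exists B.\ (a,B)\in T\wedge\exists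 f:Y\to\mathcal{P}Z.\ (\forall b\in B.(b,f(b))\in S)\wedge C=\bigcup_{b\in B}f(b)\}$. *)

theory Defs
  imports Main
begin

text \<open>Multirelations X <-> P Y are modelled as sets of type ('a \<times> 'b set) set,
  with X = UNIV :: 'a set and Y = UNIV :: 'b set.\<close>

type_synonym ('a, 'b) mrel = "('a \<times> 'b set) set"

definition mcup :: "('a,'b) mrel \<Rightarrow> ('a,'b) mrel \<Rightarrow> ('a,'b) mrel" where
  "mcup R S = {(a, A \<union> B) | a A B. (a, A) \<in> R \<and> (a, B) \<in> S}"

definition mcap :: "('a,'b) mrel \<Rightarrow> ('a,'b) mrel \<Rightarrow> ('a,'b) mrel" where
  "mcap R S = {(a, A \<inter> B) | a A B. (a, A) \<in> R \<and> (a, B) \<in> S}"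

definition one_cup :: "('a,'b) mrel" where
  "one_cup = {(a, {}) | a. a \<in> UNIV}"

definition one_cap :: "('a,'b) mrel" where
  "one_cap = {(a, UNIV) | a. a \<in> UNIV}"

definition icompl :: "('a,'b) mrel \<Rightarrow> ('a,'b) mrel" where
  "icompl R = {(a, UNIV - A) | a A. (a, A) \<in> R}"

definition mr_up :: "('a,'b) mrel \<Rightarrow> ('a,'b) mrel" where
  "mr_up R = {(a, A) | a A. \<exists>B. (a, B) \<in> R \<and> B \<subseteq> A}"

definition mr_down :: "('a,'b) mrel \<Rightarrow> ('a,'b) mrel" where
  "mr_down R = {(a, A) | a A. \<exists>B. (a, B) \<in> R \<and> A \<subseteq> B}"

definition mr_updown :: "('a,'b) mrel \<Rightarrow> ('a,'b) mrel" where
  "mr_updown R = mr_up R \<inter> mr_down R"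

definition le_up :: "('a,'b) mrel \<Rightarrow> ('a,'b) mrel \<Rightarrow> bool" where
  "le_up R S \<longleftrightarrow> S \<subseteq> mr_up R"

definition le_down :: "('a,'b) mrel \<Rightarrow> ('a,'b) mrel \<Rightarrow> bool" where
  "le_down R S \<longleftrightarrow> R \<subseteq> mr_down S"

definition le_updown :: "('a,'b) mrel \<Rightarrow> ('a,'b) mrel \<Rightarrow> bool" where
  "le_updown R S \<longleftrightarrow> le_down R S \<and> le_up R S"

definition peleg :: "('a,'b) mrel \<Rightarrow> ('b,'c) mrel \<Rightarrow> ('a,'c) mrel" where
  "peleg T S = {(a, C) | a C. \<exists>B. (a, B) \<in> T \<and>
     (\<exists>f :: 'b \<Rightarrow> 'c set. (\<forall>b\<in>B. (b, f b) \<in> S) \<and> C = (\<Union>b\<in>B. f b))}"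

end

theory Submission
  imports Defs
begin

(* Both orders are simulations along an order on the second components: le_down R S says
   that every (a, A) in R is matched by some (a, B) in S with A \<subseteq> B, and le_up R S that every
   (a, A) in S is matched by some (a, B) in R with B \<subseteq> A.  A simulation along Q survives
   the pointwise lifting of any operation Q is compatible with (mcup and mcap lift \<union> and \<inter>),
   unions of relations, and Peleg composition as soon as Q is compatible with arbitrary
   unions.  Inner complementation turns \<subseteq> into \<supseteq> and so exchanges the two orders.
   For the closure operators the orders are better read as mr_down R \<subseteq> mr_down S and
   mr_up S \<subseteq> mr_up R: both closures are idempotent and absorb mr_updown, and the mixed
   composites mr_down (mr_up R) and mr_up (mr_down R) only depend on Domain R, which both
   orders compare. *)

definition mr_lift :: "('x \<Rightarrow> 'x \<Rightarrow> 'x) \<Rightarrow> ('a \<times> 'x) set \<Rightarrow> ('a \<times> 'x) set \<Rightarrow> ('a \<times> 'x) set" where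
  "mr_lift f R S = {(a, f A B) | a A B. (a, A) \<in> R \<and> (a, B) \<in> S}"

lemma mem_mr_lift: "(a, C) \<in> mr_lift f R S \<longleftrightarrow> (\<exists>A B. (a, A) \<in> R \<and> (a, B) \<in> S \<and> C = f A B)"
  unfolding mr_lift_def by blast

lemma comm_monoid_mr_lift:
  fixes f :: "'x \<Rightarrow> 'x \<Rightarrow> 'x"
  assumes "comm_monoid f z"
  shows "comm_monoid (mr_lift f) (UNIV \<times> {z} :: ('a \<times> 'x) set)"
proof -
  interpret comm_monoid f z by fact
  show ?thesis
  proof
    fix R S T :: "('a \<times> 'x) set"
    have "mr_lift f (mr_lift f R S) T =
        {(a, f (f A B) C) | a A B C. (a, A) \<in> R \<and> (a, B) \<in> S \<and> (a, C) \<in> T}"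
      unfolding mr_lift_def by blast
    also have "\<dots> = {(a, f A (f B C)) | a A B C. (a, A) \<in> R \<and> (a, B) \<in> S \<and> (a, C) \<in> T}"
      by (simp only: assoc)
    also have "\<dots> = mr_lift f R (mr_lift f S T)"
      unfolding mr_lift_def by blast
    finally show "mr_lift f (mr_lift f R S) T = mr_lift f R (mr_lift f S T)" .
    have "mr_lift f R S = mr_lift (\<lambda>A B. f B A) S R"
      unfolding mr_lift_def by blast
    then show "mr_lift f R S = mr_lift f S R"
      by (simp add: commute)
    show "mr_lift f R (UNIV \<times> {z}) = R"
      unfolding mr_lift_def by (force simp: comm_neutral)
  qed
qed

lemma mcup_eq_mr_lift: "mcup = mr_lift (\<union>)"
  by (intro ext) (simp add: mcup_def mr_lift_def)

lemma mcap_eq_mr_lift: "mcap = mr_lift (\<inter>)"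
  by (intro ext) (simp add: mcap_def mr_lift_def)

lemma one_cup_eq_Times: "one_cup = UNIV \<times> {{}}"
  by (auto simp: one_cup_def)

lemma one_cap_eq_Times: "one_cap = UNIV \<times> {UNIV}"
  by (auto simp: one_cap_def)

lemma comm_monoid_mcup: "comm_monoid mcup one_cup"
  using comm_monoid_mr_lift[OF sup_bot.comm_monoid_axioms]
  by (simp add: mcup_eq_mr_lift one_cup_eq_Times)

lemma comm_monoid_mcap: "comm_monoid mcap one_cap"
  using comm_monoid_mr_lift[OF inf_top.comm_monoid_axioms]
  by (simp add: mcap_eq_mr_lift one_cap_eq_Times)

lemma mem_icompl: "(a, A) \<in> icompl R \<longleftrightarrow> (a, - A) \<in> R"
  unfolding icompl_def by (auto simp: Compl_eq_Diff_UNIV[symmetric])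

lemma icompl_icompl [simp]: "icompl (icompl R) = R"
  by (auto simp: mem_icompl)

lemma bij_icompl: "bij icompl"
  by (rule involuntory_imp_bij) simp

lemma icompl_mr_lift:
  assumes "\<And>A B. - f A B = g (- A) (- B)"
  shows "icompl (mr_lift f R S) = mr_lift g (icompl R) (icompl S)"
  by (auto simp: mem_icompl mem_mr_lift) (metis assms double_compl)+

lemma icompl_mcup: "icompl (mcup R S) = mcap (icompl R) (icompl S)"
  unfolding mcup_eq_mr_lift mcap_eq_mr_lift by (rule icompl_mr_lift) simp

lemma icompl_mcap: "icompl (mcap R S) = mcup (icompl R) (icompl S)"
  unfolding mcup_eq_mr_lift mcap_eq_mr_lift by (rule icompl_mr_lift) simp

lemma icompl_one_cup: "icompl one_cup = one_cap"
  by (auto simp: mem_icompl one_cup_def one_cap_def)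

lemma icompl_one_cap: "icompl one_cap = one_cup"
  by (metis icompl_icompl icompl_one_cup)

definition mr_sim :: "('x \<Rightarrow> 'y \<Rightarrow> bool) \<Rightarrow> ('a \<times> 'x) set \<Rightarrow> ('a \<times> 'y) set \<Rightarrow> bool" where
  "mr_sim Q R S \<longleftrightarrow> (\<forall>(a, A) \<in> R. \<exists>B. (a, B) \<in> S \<and> Q A B)"

lemma mr_sim_Un: "mr_sim Q R S \<Longrightarrow> mr_sim Q R' S' \<Longrightarrow> mr_sim Q (R \<union> R') (S \<union> S')"
  unfolding mr_sim_def by blast

lemma mr_sim_mr_lift:
  assumes Q: "\<And>A A' B B'. Q A A' \<Longrightarrow> Q B B' \<Longrightarrow> Q (f A B) (g A' B')"
    and R: "mr_sim Q R R'" and S: "mr_sim Q S S'"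
  shows "mr_sim Q (mr_lift f R S) (mr_lift g R' S')"
  unfolding mr_sim_def
proof clarify
  fix a C assume "(a, C) \<in> mr_lift f R S"
  then obtain A B where A: "(a, A) \<in> R" and B: "(a, B) \<in> S" and C: "C = f A B"
    by (auto simp: mem_mr_lift)
  obtain A' where "(a, A') \<in> R'" "Q A A'"
    using R A unfolding mr_sim_def by blast
  moreover obtain B' where "(a, B') \<in> S'" "Q B B'"
    using S B unfolding mr_sim_def by blast
  ultimately have "(a, g A' B') \<in> mr_lift g R' S'" and "Q C (g A' B')"
    using Q C by (auto simp: mem_mr_lift)
  then show "\<exists>D. (a, D) \<in> mr_lift g R' S' \<and> Q C D"
    by blast
qed

lemma mr_sim_peleg:
  fixes T :: "('a, 'b) mrel" and R S :: "('b, 'c) mrel"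
  assumes Q_UN: "\<And>(I :: 'b set) f g. (\<And>i. i \<in> I \<Longrightarrow> Q (f i) (g i)) \<Longrightarrow>
      Q (\<Union>i\<in>I. f i) (\<Union>i\<in>I. g i)"
    and "mr_sim Q R S"
  shows "mr_sim Q (peleg T R) (peleg T S)"
  unfolding mr_sim_def
proof clarify
  fix a C assume "(a, C) \<in> peleg T R"
  then obtain B f where B: "(a, B) \<in> T" and f: "\<forall>b\<in>B. (b, f b) \<in> R"
    and C: "C = (\<Union>b\<in>B. f b)"
    unfolding peleg_def by blast
  have "\<forall>b\<in>B. \<exists>D. (b, D) \<in> S \<and> Q (f b) D"
    using f \<open>mr_sim Q R S\<close> unfolding mr_sim_def by blast
  then obtain g where g: "\<forall>b\<in>B. (b, g b) \<in> S \<and> Q (f b) (g b)"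
    by metis
  have "(a, \<Union>b\<in>B. g b) \<in> peleg T S"
    unfolding peleg_def using B g by blast
  moreover have "Q C (\<Union>b\<in>B. g b)"
    unfolding C by (rule Q_UN) (use g in blast)
  ultimately show "\<exists>D. (a, D) \<in> peleg T S \<and> Q C D"
    by blast
qed

lemma mr_sim_icomplI:
  assumes "mr_sim Q R S"
  shows "mr_sim (\<lambda>A B. Q (- A) (- B)) (icompl R) (icompl S)"
  unfolding mr_sim_def
proof clarify
  fix a A assume "(a, A) \<in> icompl R"
  then have "(a, - A) \<in> R"
    by (simp add: mem_icompl)
  then obtain B where "(a, B) \<in> S" "Q (- A) B"
    using assms unfolding mr_sim_def by blast
  then show "\<exists>B. (a, B) \<in> icompl S \<and> Q (- A) (- B)"
    by (intro exI[of _ "- B"]) (simp add: mem_icompl)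
qed

lemma mr_sim_icompl: "mr_sim Q (icompl R) (icompl S) \<longleftrightarrow> mr_sim (\<lambda>A B. Q (- A) (- B)) R S"
proof
  assume "mr_sim Q (icompl R) (icompl S)"
  from mr_sim_icomplI[OF this] show "mr_sim (\<lambda>A B. Q (- A) (- B)) R S"
    by simp
next
  assume "mr_sim (\<lambda>A B. Q (- A) (- B)) R S"
  from mr_sim_icomplI[OF this] show "mr_sim Q (icompl R) (icompl S)"
    by simp
qed

lemma le_down_eq_mr_sim: "le_down R S = mr_sim (\<subseteq>) R S"
  unfolding le_down_def mr_sim_def mr_down_def by blast

lemma le_up_eq_mr_sim: "le_up R S = mr_sim (\<supseteq>) S R"
  unfolding le_up_def mr_sim_def mr_up_def by blast

lemma le_down_mcup: "le_down R R' \<Longrightarrow> le_down S S' \<Longrightarrow> le_down (mcup R S) (mcup R' S')"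
  unfolding le_down_eq_mr_sim mcup_eq_mr_lift by (rule mr_sim_mr_lift) blast+

lemma le_down_mcap: "le_down R R' \<Longrightarrow> le_down S S' \<Longrightarrow> le_down (mcap R S) (mcap R' S')"
  unfolding le_down_eq_mr_sim mcap_eq_mr_lift by (rule mr_sim_mr_lift) blast+

lemma le_up_mcup: "le_up R R' \<Longrightarrow> le_up S S' \<Longrightarrow> le_up (mcup R S) (mcup R' S')"
  unfolding le_up_eq_mr_sim mcup_eq_mr_lift by (rule mr_sim_mr_lift) blast+

lemma le_up_mcap: "le_up R R' \<Longrightarrow> le_up S S' \<Longrightarrow> le_up (mcap R S) (mcap R' S')"
  unfolding le_up_eq_mr_sim mcap_eq_mr_lift by (rule mr_sim_mr_lift) blast+

lemma le_down_Un: "le_down R S \<Longrightarrow> le_down R' S' \<Longrightarrow> le_down (R \<union> R') (S \<union> S')"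
  unfolding le_down_eq_mr_sim by (rule mr_sim_Un)

lemma le_up_Un: "le_up R S \<Longrightarrow> le_up R' S' \<Longrightarrow> le_up (R \<union> R') (S \<union> S')"
  unfolding le_up_eq_mr_sim by (rule mr_sim_Un)

lemma le_down_peleg: "le_down R S \<Longrightarrow> le_down (peleg T R) (peleg T S)"
  unfolding le_down_eq_mr_sim by (rule mr_sim_peleg) blast+

lemma le_up_peleg: "le_up R S \<Longrightarrow> le_up (peleg T R) (peleg T S)"
  unfolding le_up_eq_mr_sim by (rule mr_sim_peleg) blast+

lemma le_down_icompl_iff [simp]: "le_down (icompl R) (icompl S) \<longleftrightarrow> le_up S R"
  by (simp add: le_down_eq_mr_sim le_up_eq_mr_sim mr_sim_icompl)

lemma le_up_icompl_iff [simp]: "le_up (icompl R) (icompl S) \<longleftrightarrow> le_down S R"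
  by (simp add: le_down_eq_mr_sim le_up_eq_mr_sim mr_sim_icompl)

lemma mr_down_increasing: "R \<subseteq> mr_down R"
  unfolding mr_down_def by auto

lemma mr_up_increasing: "R \<subseteq> mr_up R"
  unfolding mr_up_def by auto

lemma mr_down_mono: "R \<subseteq> S \<Longrightarrow> mr_down R \<subseteq> mr_down S"
  unfolding mr_down_def by blast

lemma mr_up_mono: "R \<subseteq> S \<Longrightarrow> mr_up R \<subseteq> mr_up S"
  unfolding mr_up_def by blast

lemma mr_down_mr_down [simp]: "mr_down (mr_down R) = mr_down R"
  unfolding mr_down_def by (blast intro: order_trans)

lemma mr_up_mr_up [simp]: "mr_up (mr_up R) = mr_up R"
  unfolding mr_up_def by (blast intro: order_trans)

lemma le_down_iff_mr_down_subset: "le_down R S \<longleftrightarrow> mr_down R \<subseteq> mr_down S"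
  unfolding le_down_def by (metis mr_down_increasing mr_down_mono mr_down_mr_down order_trans)

lemma le_up_iff_mr_up_subset: "le_up R S \<longleftrightarrow> mr_up S \<subseteq> mr_up R"
  unfolding le_up_def by (metis mr_up_increasing mr_up_mono mr_up_mr_up order_trans)

lemma le_down_refl [simp]: "le_down R R"
  by (simp add: le_down_iff_mr_down_subset)

lemma le_up_refl [simp]: "le_up R R"
  by (simp add: le_up_iff_mr_up_subset)

lemma preorder_le_down: "reflp le_down" "transp le_down"
  by (auto intro!: reflpI transpI simp: le_down_iff_mr_down_subset)

lemma preorder_le_up: "reflp le_up" "transp le_up"
  by (auto intro!: reflpI transpI simp: le_up_iff_mr_up_subset)

lemma preorder_le_updown: "reflp le_updown" "transp le_updown"
  using preorder_le_down preorder_le_up unfolding le_updown_def reflp_def transp_def by blast+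

lemma le_down_bounds: "le_down {} R" "le_down R UNIV"
  by (auto simp: le_down_def mr_down_def)

lemma le_up_bounds: "le_up UNIV R" "le_up R {}"
  by (auto simp: le_up_def mr_up_def)

lemma mr_down_mr_updown [simp]: "mr_down (mr_updown R) = mr_down R"
  unfolding mr_updown_def mr_down_def mr_up_def by blast

lemma mr_up_mr_updown [simp]: "mr_up (mr_updown R) = mr_up R"
  unfolding mr_updown_def mr_down_def mr_up_def by blast

lemma mr_down_mr_up: "mr_down (mr_up R) = Domain R \<times> UNIV"
  unfolding mr_down_def mr_up_def by force

lemma mr_up_mr_down: "mr_up (mr_down R) = Domain R \<times> UNIV"
  unfolding mr_down_def mr_up_def by force

lemma Domain_mr_down [simp]: "Domain (mr_down R) = Domain R"
  unfolding mr_down_def by force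

lemma Domain_mr_up [simp]: "Domain (mr_up R) = Domain R"
  unfolding mr_up_def by force

lemma le_down_Domain: "le_down R S \<Longrightarrow> Domain R \<subseteq> Domain S"
  by (metis Domain_mono Domain_mr_down le_down_iff_mr_down_subset)

lemma le_up_Domain: "le_up R S \<Longrightarrow> Domain S \<subseteq> Domain R"
  by (metis Domain_mono Domain_mr_up le_up_iff_mr_up_subset)

lemma le_down_mr_up: "le_down R S \<Longrightarrow> le_down (mr_up R) (mr_up S)"
  by (drule le_down_Domain) (auto simp: le_down_iff_mr_down_subset mr_down_mr_up)

lemma le_down_mr_down: "le_down R S \<Longrightarrow> le_down (mr_down R) (mr_down S)"
  by (simp add: le_down_iff_mr_down_subset)

lemma le_down_mr_updown: "le_down R S \<Longrightarrow> le_down (mr_updown R) (mr_updown S)"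
  by (simp add: le_down_iff_mr_down_subset)

lemma le_up_mr_up: "le_up R S \<Longrightarrow> le_up (mr_up R) (mr_up S)"
  by (simp add: le_up_iff_mr_up_subset)

lemma le_up_mr_down: "le_up R S \<Longrightarrow> le_up (mr_down R) (mr_down S)"
  by (drule le_up_Domain) (auto simp: le_up_iff_mr_up_subset mr_up_mr_down)

lemma le_up_mr_updown: "le_up R S \<Longrightarrow> le_up (mr_updown R) (mr_updown S)"
  by (simp add: le_up_iff_mr_up_subset)

theorem proposition5p3:
  fixes U :: "('a, 'b) mrel"
  defines "U \<equiv> UNIV"
  shows
   \<comment> \<open>algebraic laws of the two operations (common to (1)-(3))\<close>
   "(\<forall>R S T :: ('a,'b) mrel. mcup R (mcup S T) = mcup (mcup R S) T) \<and>
    (\<forall>R S :: ('a,'b) mrel. mcup R S = mcup S R) \<and>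
    (\<forall>R :: ('a,'b) mrel. mcup one_cup R = R \<and> mcup R one_cup = R) \<and>
    (\<forall>R S T :: ('a,'b) mrel. mcap R (mcap S T) = mcap (mcap R S) T) \<and>
    (\<forall>R S :: ('a,'b) mrel. mcap R S = mcap S R) \<and>
    (\<forall>R :: ('a,'b) mrel. mcap one_cap R = R \<and> mcap R one_cap = R) \<and>
   \<comment> \<open>(1)-(3): preorders, monotonicity of the operations\<close>
    (\<forall>le \<in> {le_down, le_up, le_updown :: ('a,'b) mrel \<Rightarrow> ('a,'b) mrel \<Rightarrow> bool}.
       reflp le \<and> transp le \<and>
       (\<forall>R R' S S'. le R R' \<longrightarrow> le S S' \<longrightarrow> le (mcup R S) (mcup R' S')) \<and>
       (\<forall>R R' S S'. le R R' \<longrightarrow> le S S' \<longrightarrow> le (mcap R S) (mcap R' S'))) \<and>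
   \<comment> \<open>(1) bounds\<close>
    (\<forall>R. le_down {} R \<and> le_down R U) \<and>
   \<comment> \<open>(2) bounds\<close>
    (\<forall>R. le_up U R \<and> le_up R {}) \<and>
   \<comment> \<open>(4) inner complementation\<close>
    bij (icompl :: ('a,'b) mrel \<Rightarrow> ('a,'b) mrel) \<and>
    (\<forall>R S :: ('a,'b) mrel. icompl (mcup R S) = mcap (icompl R) (icompl S)) \<and>
    (\<forall>R S :: ('a,'b) mrel. icompl (mcap R S) = mcup (icompl R) (icompl S)) \<and>
    icompl (one_cup :: ('a,'b) mrel) = one_cap \<and>
    icompl (one_cap :: ('a,'b) mrel) = one_cup \<and>
    (\<forall>R S :: ('a,'b) mrel. le_down R S \<longleftrightarrow> le_up (icompl S) (icompl R)) \<and>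
    (\<forall>R S :: ('a,'b) mrel. le_up R S \<longleftrightarrow> le_down (icompl S) (icompl R)) \<and>
    (\<forall>R S :: ('a,'b) mrel. le_updown R S \<longleftrightarrow> le_updown (icompl S) (icompl R)) \<and>
   \<comment> \<open>(5) precongruence\<close>
    (\<forall>le \<in> {le_down, le_up, le_updown :: ('a,'b) mrel \<Rightarrow> ('a,'b) mrel \<Rightarrow> bool}.
       \<forall>R S T. le R S \<longrightarrow>
         le (R \<union> T) (S \<union> T) \<and> le (T \<union> R) (T \<union> S) \<and>
         le (mr_up R) (mr_up S) \<and> le (mr_down R) (mr_down S) \<and>
         le (mr_updown R) (mr_updown S)) \<and>
   \<comment> \<open>(6) Peleg composition, second argument\<close>
    (\<forall>(T :: ('a,'b) mrel) (R :: ('b,'c) mrel) S.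
       (le_down R S \<longrightarrow> le_down (peleg T R) (peleg T S)) \<and>
       (le_up R S \<longrightarrow> le_up (peleg T R) (peleg T S)) \<and>
       (le_updown R S \<longrightarrow> le_updown (peleg T R) (peleg T S)))"
proof -
  interpret mcup: comm_monoid mcup one_cup by (rule comm_monoid_mcup)
  interpret mcap: comm_monoid mcap one_cap by (rule comm_monoid_mcap)
  show ?thesis
    unfolding U_def
    by (auto simp: mcup.assoc mcup.commute mcup.left_commute
        mcap.assoc mcap.commute mcap.left_commute
        preorder_le_down preorder_le_up preorder_le_updown le_updown_def
        le_down_mcup le_down_mcap le_up_mcup le_up_mcap le_down_bounds le_up_bounds
        bij_icompl icompl_mcup icompl_mcap icompl_one_cup icompl_one_cap
        le_down_Un le_up_Un le_down_mr_up le_down_mr_down le_down_mr_updown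
        le_up_mr_up le_up_mr_down le_up_mr_updown le_down_peleg le_up_peleg)
qed

end
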